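(* Let $p$ be an odd prime. For all $n\ge1$, the quotient $A_n/\Phi_nA$ is a rational vector space (i.e. it is divisible and torsion-free as an abelian group).
   Context: $A$ is the ring of degree zero stable operations in $p$-local complex $K$-theory. Fix $q$ primitive mod $p^2$, $\Psi^q\in A$ the Adams operation, $q_i=q^{(-1)^i\lfloor i/2\rfloor}$, $\Theta_n(X)=\prod_{i=1}^n(X-q_i)$, $\Phi_n=\Theta_n(\Psi^q)$; every element of $A$ is uniquely a convergent sum $\sum_{n\ge0}a_n\Phi_n$ with $a_n\in\mathbb{Z}_{(p)}$, and $A_m=\{\sum_{n\ge m}a_n\Phi_n:a_n\in\mathbb{Z}_{(p)}\}$, an ideal of $A$ containing $\Phi_mA$. *)

theory Defs
  imports "HOL-Number_Theory.Number_Theory" "HOL-Computational_Algebra.Polynomial"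
begin

definition zloc :: "nat \<Rightarrow> rat \<Rightarrow> bool" where
  "zloc p r \<longleftrightarrow> \<not> (int p dvd snd (quotient_of r))"

definition primitive_mod :: "nat \<Rightarrow> int \<Rightarrow> bool" where
  "primitive_mod m q \<longleftrightarrow> residue_primroot m (nat (q mod int m))"

definition qnode :: "int \<Rightarrow> nat \<Rightarrow> rat" where
  "qnode q i = (of_int q) powi ((-1) ^ i * int (i div 2))"

definition Theta :: "int \<Rightarrow> nat \<Rightarrow> rat poly" where
  "Theta q n = (\<Prod>i\<in>{1..n}. [:- qnode q i, 1:])"

text \<open>Coordinates of a polynomial in the Newton basis (Theta_k)_k:
  f = c_0 + (X - q_1)(c_1 + (X - q_2)(c_2 + ...)); ncoord q 0 f k = c_k.\<close>
fun ncoord :: "int \<Rightarrow> nat \<Rightarrow> rat poly \<Rightarrow> nat \<Rightarrow> rat" where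
  "ncoord q i f 0 = poly f (qnode q (Suc i))"
| "ncoord q i f (Suc k) =
     ncoord q (Suc i) ((f - [:poly f (qnode q (Suc i)):]) div [:- qnode q (Suc i), 1:]) k"

text \<open>Model of A: an element sum_n a_n Phi_n is its coefficient sequence a (a_n in Z_(p)).\<close>
definition Acar :: "nat \<Rightarrow> (nat \<Rightarrow> rat) set" where
  "Acar p = {a. \<forall>n. zloc p (a n)}"

text \<open>Product in A: Phi_n Phi_m = sum_k ncoord(Theta_n Theta_m, k) Phi_k, a finite sum
  with max(n,m) \<le> k \<le> n+m, extended bilinearly and continuously.\<close>
definition amul :: "int \<Rightarrow> (nat \<Rightarrow> rat) \<Rightarrow> (nat \<Rightarrow> rat) \<Rightarrow> nat \<Rightarrow> rat" where
  "amul q a b k = (\<Sum>n\<le>k. \<Sum>m\<le>k. a n * b m * ncoord q 0 (Theta q n * Theta q m) k)"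

text \<open>Phi_n = Theta_n(Psi^q) as an element of A.\<close>
definition PhiA :: "nat \<Rightarrow> nat \<Rightarrow> rat" where
  "PhiA n = (\<lambda>k. if k = n then 1 else 0)"

definition Aideal :: "nat \<Rightarrow> nat \<Rightarrow> (nat \<Rightarrow> rat) set" where
  "Aideal p m = {a \<in> Acar p. \<forall>k<m. a k = 0}"

definition PhiIdeal :: "nat \<Rightarrow> int \<Rightarrow> nat \<Rightarrow> (nat \<Rightarrow> rat) set" where
  "PhiIdeal p q n = {amul q (PhiA n) x | x. x \<in> Acar p}"

definition quotient_divisible :: "(nat \<Rightarrow> rat) set \<Rightarrow> (nat \<Rightarrow> rat) set \<Rightarrow> bool" where
  "quotient_divisible G H \<longleftrightarrow>
     (\<forall>y\<in>G. \<forall>k::int. k \<noteq> 0 \<longrightarrow> (\<exists>z\<in>G. (\<lambda>i. of_int k * z i - y i) \<in> H))"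

definition quotient_torsion_free :: "(nat \<Rightarrow> rat) set \<Rightarrow> (nat \<Rightarrow> rat) set \<Rightarrow> bool" where
  "quotient_torsion_free G H \<longleftrightarrow>
     (\<forall>y\<in>G. \<forall>k::int. k \<noteq> 0 \<longrightarrow> (\<lambda>i. of_int k * y i) \<in> H \<longrightarrow> y \<in> H)"

end

theory Submission
  imports Defs
begin

text \<open>
  In Newton coordinates, multiplication by \<open>\<Psi>\<^sup>q - c\<close> sends \<open>(x\<^sub>k)\<close> to
  \<open>(x\<^sub>k\<^sub>-\<^sub>1 + (q\<^sub>k\<^sub>+\<^sub>1 - c) x\<^sub>k)\<close>, and \<open>\<Phi>\<^sub>n\<close> is the product of \<open>n\<close> such factors
  with \<open>c = q\<^sub>1, \<dots>, q\<^sub>n\<close>. Everything reduces to statements modulo \<open>p\<close> about one factor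
  with \<open>c = q\<^sub>j\<close>. Solving \<open>y = (\<Psi>\<^sup>q - c) x\<close> backwards, \<open>x\<^sub>k = y\<^sub>k\<^sub>+\<^sub>1 - (q\<^sub>k\<^sub>+\<^sub>2 - c) x\<^sub>k\<^sub>+\<^sub>1\<close>,
  and iterating \<open>2p\<close> times, the remainder carries a product of \<open>2p\<close> consecutive factors
  \<open>q\<^sub>i - q\<^sub>j\<close>. By Fermat one of them is divisible by \<open>p\<close>, because \<open>q\<^sub>2\<^sub>m = q\<^sup>m\<close> and
  \<open>q\<^sup>m \<equiv> q\<^sup>e\<close> whenever \<open>m \<equiv> e mod p - 1\<close>. Hence multiplication by \<open>\<Phi>\<^sub>n\<close> is injective
  modulo \<open>p\<close>, and truncating the back substitution shows that every element of
  \<open>A\<^sub>n\<close> is \<open>\<Phi>\<^sub>n x\<close> modulo \<open>p A\<^sub>n\<close>. Iterating over powers of \<open>p\<close> gives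
  \<open>y = p\<^sup>e z + \<Phi>\<^sub>n x\<close> with \<open>z \<in> A\<^sub>n\<close> (divisibility) and \<open>\<Phi>\<^sub>n x \<in> p\<^sup>e A \<Longrightarrow> x \<in> p\<^sup>e A\<close>
  (torsion-freeness). The prime-to-\<open>p\<close> part of an integer is a unit of \<open>\<int>\<^sub>(\<^sub>p\<^sub>)\<close>.
\<close>

section \<open>The local ring \<open>\<int>\<^sub>(\<^sub>p\<^sub>)\<close>\<close>

definition pdvd_loc :: "nat \<Rightarrow> rat \<Rightarrow> bool" where
  "pdvd_loc p r \<longleftrightarrow> zloc p (r / of_nat p)"

context
  fixes p :: nat
  assumes p_prime: "prime p"
begin

lemma zloc_iff: "zloc p r \<longleftrightarrow> (\<exists>a b. \<not> int p dvd b \<and> r = of_int a / of_int b)"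
proof
  assume "zloc p r"
  obtain a b where qr: "quotient_of r = (a, b)" by fastforce
  then show "\<exists>a b. \<not> int p dvd b \<and> r = of_int a / of_int b"
    using \<open>zloc p r\<close> quotient_of_div[OF qr] by (auto simp: zloc_def)
next
  assume "\<exists>a b. \<not> int p dvd b \<and> r = of_int a / of_int b"
  then obtain a b where b: "\<not> int p dvd b" and r: "r = of_int a / of_int b" by blast
  obtain a' b' where qr: "quotient_of r = (a', b')" by fastforce
  have "b \<noteq> 0" "b' \<noteq> 0" using b quotient_of_denom_pos[OF qr] by auto
  then have "of_int (a' * b) = (of_int (a * b') :: rat)"
    using r quotient_of_div[OF qr] by (simp add: field_simps)
  then have "b' dvd a' * b" by (metis dvd_triv_right mult.commute of_int_eq_iff)
  then have "b' dvd b"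
    using quotient_of_coprime[OF qr] by (metis coprime_commute coprime_dvd_mult_right_iff)
  then show "zloc p r" using b qr by (auto simp: zloc_def dest: dvd_trans)
qed

lemma zloc_of_int: "zloc p (of_int a)"
  using p_prime by (auto simp: zloc_def)

lemma zloc_of_nat: "zloc p (of_nat a)"
  using zloc_of_int[of "int a"] by simp

lemma zloc_0: "zloc p 0"
  using zloc_of_int[of 0] by simp

lemma zloc_1: "zloc p 1"
  using zloc_of_int[of 1] by simp

lemma zloc_add:
  assumes "zloc p r" "zloc p s"
  shows "zloc p (r + s)"
proof -
  obtain a b c d where ab: "\<not> int p dvd b" "r = of_int a / of_int b"
    and cd: "\<not> int p dvd d" "s = of_int c / of_int d"
    using assms by (auto simp: zloc_iff)
  then have "b \<noteq> 0" "d \<noteq> 0" by auto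
  then have "r + s = of_int (a * d + b * c) / of_int (b * d)"
    using ab cd by (simp add: add_frac_eq)
  moreover have "\<not> int p dvd b * d" using ab cd p_prime by (simp add: prime_dvd_mult_iff)
  ultimately show ?thesis unfolding zloc_iff by blast
qed

lemma zloc_mult:
  assumes "zloc p r" "zloc p s"
  shows "zloc p (r * s)"
proof -
  obtain a b c d where ab: "\<not> int p dvd b" "r = of_int a / of_int b"
    and cd: "\<not> int p dvd d" "s = of_int c / of_int d"
    using assms by (auto simp: zloc_iff)
  then have "r * s = of_int (a * c) / of_int (b * d)" by simp
  moreover have "\<not> int p dvd b * d" using ab cd p_prime by (simp add: prime_dvd_mult_iff)
  ultimately show ?thesis unfolding zloc_iff by blast
qed

lemma zloc_uminus: "zloc p r \<Longrightarrow> zloc p (- r)"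
  using zloc_mult[of "- 1" r] zloc_of_int[of "- 1"] by simp

lemma zloc_diff: "zloc p r \<Longrightarrow> zloc p s \<Longrightarrow> zloc p (r - s)"
  using zloc_add[of r "- s"] zloc_uminus[of s] by simp

lemma zloc_divide_int:
  assumes "zloc p r" "\<not> int p dvd u"
  shows "zloc p (r / of_int u)"
proof -
  obtain a b where ab: "\<not> int p dvd b" "r = of_int a / of_int b"
    using assms by (auto simp: zloc_iff)
  then have "r / of_int u = of_int a / of_int (b * u)" by simp
  moreover have "\<not> int p dvd b * u" using ab assms p_prime by (simp add: prime_dvd_mult_iff)
  ultimately show ?thesis unfolding zloc_iff by blast
qed

lemma zloc_sum: "(\<And>i. i \<in> S \<Longrightarrow> zloc p (f i)) \<Longrightarrow> zloc p (\<Sum>i\<in>S. f i)"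
  by (induction S rule: infinite_finite_induct) (auto intro: zloc_0 zloc_add)

lemma zloc_prod: "(\<And>i. i \<in> S \<Longrightarrow> zloc p (f i)) \<Longrightarrow> zloc p (\<Prod>i\<in>S. f i)"
  by (induction S rule: infinite_finite_induct) (auto intro: zloc_1 zloc_mult)

lemma zloc_sign: "zloc p ((- 1) ^ s)"
  using zloc_of_int[of "(- 1) ^ s"] by simp

lemma zloc_powi:
  assumes "\<not> int p dvd q"
  shows "zloc p (of_int q powi e)"
proof (cases "e \<ge> 0")
  case True
  then show ?thesis using zloc_of_int[of "q ^ nat e"] by (simp add: power_int_def)
next
  case False
  have "\<not> int p dvd q ^ nat (- e)"
    using assms p_prime by (metis prime_dvd_power prime_nat_int_transfer)
  then have "zloc p (of_int 1 / of_int (q ^ nat (- e)))"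
    by (intro zloc_divide_int zloc_of_int)
  then show ?thesis using False by (simp add: power_int_def power_inverse divide_inverse)
qed

lemma pdvd_loc_0: "pdvd_loc p 0"
  by (simp add: pdvd_loc_def zloc_0 p_prime)

lemma pdvd_loc_add: "pdvd_loc p r \<Longrightarrow> pdvd_loc p s \<Longrightarrow> pdvd_loc p (r + s)"
  unfolding pdvd_loc_def by (simp add: add_divide_distrib zloc_add p_prime)

lemma pdvd_loc_uminus: "pdvd_loc p r \<Longrightarrow> pdvd_loc p (- r)"
  unfolding pdvd_loc_def using zloc_uminus by simp

lemma pdvd_loc_mult_left: "pdvd_loc p r \<Longrightarrow> zloc p s \<Longrightarrow> pdvd_loc p (r * s)"
  unfolding pdvd_loc_def using zloc_mult by (metis times_divide_eq_left)

lemma pdvd_loc_mult_right: "zloc p s \<Longrightarrow> pdvd_loc p r \<Longrightarrow> pdvd_loc p (s * r)"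
  using pdvd_loc_mult_left by (metis mult.commute)

lemma pdvd_loc_of_int: "int p dvd a \<Longrightarrow> pdvd_loc p (of_int a)"
  using p_prime by (auto simp: pdvd_loc_def zloc_of_int prime_gt_0_nat)

lemma pdvd_loc_sum: "(\<And>i. i \<in> S \<Longrightarrow> pdvd_loc p (f i)) \<Longrightarrow> pdvd_loc p (\<Sum>i\<in>S. f i)"
  by (induction S rule: infinite_finite_induct) (auto intro: pdvd_loc_0 pdvd_loc_add)

lemma pdvd_loc_prod:
  assumes "finite S" "i \<in> S" "pdvd_loc p (f i)" "\<And>j. j \<in> S \<Longrightarrow> zloc p (f j)"
  shows "pdvd_loc p (\<Prod>j\<in>S. f j)"
proof -
  have "zloc p (\<Prod>j\<in>S - {i}. f j)" using assms(4) by (intro zloc_prod) auto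
  moreover have "(\<Prod>j\<in>S. f j) = f i * (\<Prod>j\<in>S - {i}. f j)"
    by (rule prod.remove[OF assms(1,2)])
  ultimately show ?thesis using pdvd_loc_mult_left[OF assms(3)] by simp
qed

end

section \<open>Newton coordinates of multiplication by \<open>\<Phi>\<^sub>n\<close>\<close>

text \<open>Coordinates of \<open>(X - c) f\<close> when \<open>f\<close> has coordinates \<open>x\<close>, because
  \<open>(X - c) \<Theta>\<^sub>k = \<Theta>\<^sub>k\<^sub>+\<^sub>1 + (q\<^sub>k\<^sub>+\<^sub>1 - c) \<Theta>\<^sub>k\<close>.\<close>

definition lin_mult :: "int \<Rightarrow> rat \<Rightarrow> (nat \<Rightarrow> rat) \<Rightarrow> nat \<Rightarrow> rat" where
  "lin_mult q c x k = (if k = 0 then 0 else x (k - 1)) + (qnode q (Suc k) - c) * x k"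

fun phi_mult :: "int \<Rightarrow> nat \<Rightarrow> (nat \<Rightarrow> rat) \<Rightarrow> nat \<Rightarrow> rat" where
  "phi_mult q 0 x = x"
| "phi_mult q (Suc n) x = lin_mult q (qnode q (Suc n)) (phi_mult q n x)"

text \<open>\<open>Theta_shift q i k = \<Prod>j=i+1..i+k. (X - q\<^sub>j)\<close>, the basis in which \<open>ncoord q i\<close> expands.\<close>

fun Theta_shift :: "int \<Rightarrow> nat \<Rightarrow> nat \<Rightarrow> rat poly" where
  "Theta_shift q i 0 = 1"
| "Theta_shift q i (Suc k) = [:- qnode q (Suc i), 1:] * Theta_shift q (Suc i) k"

lemma ncoord_Theta_shift_sum:
  "ncoord q i (\<Sum>j<N. smult (a j) (Theta_shift q i j)) k = (if k < N then a k else 0)"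
proof (induction k arbitrary: i a N)
  case 0
  have node: "poly (Theta_shift q i j) (qnode q (Suc i)) = (if j = 0 then 1 else 0)" for j
    by (cases j) auto
  have "poly (\<Sum>j<N. smult (a j) (Theta_shift q i j)) (qnode q (Suc i))
      = (\<Sum>j<N. a j * (if j = 0 then 1 else 0))"
    by (simp only: poly_sum poly_smult node)
  also have "\<dots> = (if 0 < N then a 0 else 0)"
    by (simp add: sum.delta' if_distrib cong: if_cong)
  finally show ?case by simp
next
  case (Suc k)
  show ?case
  proof (cases N)
    case 0
    then show ?thesis using Suc.IH[of "Suc i" a 0] by simp
  next
    case (Suc N')
    define c where "c = qnode q (Suc i)"
    define g where "g = (\<Sum>j<N'. smult (a (Suc j)) (Theta_shift q (Suc i) j))"
    have f: "(\<Sum>j<N. smult (a j) (Theta_shift q i j)) = [:a 0:] + [:- c, 1:] * g"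
      unfolding g_def c_def Suc sum.lessThan_Suc_shift
      by (simp add: sum_distrib_left mult_smult_right)
    have "poly ([:a 0:] + [:- c, 1:] * g) c = a 0" by simp
    moreover have "[:- c, 1:] \<noteq> 0" by simp
    ultimately have quot:
        "([:a 0:] + [:- c, 1:] * g - [:poly ([:a 0:] + [:- c, 1:] * g) c:]) div [:- c, 1:] = g"
      by (simp only: add_diff_cancel_left') (rule nonzero_mult_div_cancel_left)
    show ?thesis
      unfolding ncoord.simps f c_def[symmetric] quot
      using Suc.IH[of "Suc i" "\<lambda>j. a (Suc j)" N'] by (simp add: g_def Suc)
  qed
qed

lemma Theta_shift_Suc_right:
  "Theta_shift q i (Suc k) = Theta_shift q i k * [:- qnode q (Suc (i + k)), 1:]"
proof (induction k arbitrary: i)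
  case 0
  show ?case by simp
next
  case (Suc k)
  have "Theta_shift q i (Suc (Suc k))
      = [:- qnode q (Suc i), 1:] * (Theta_shift q (Suc i) k * [:- qnode q (Suc (Suc i + k)), 1:])"
    using Suc.IH by (simp only: Theta_shift.simps)
  then show ?case by (simp only: mult.assoc[symmetric] Theta_shift.simps add_Suc add_Suc_right)
qed

lemma Theta_Suc: "Theta q (Suc n) = [:- qnode q (Suc n), 1:] * Theta q n"
  unfolding Theta_def by (simp add: prod.cl_ivl_Suc mult_ac)

lemma Theta_eq_Theta_shift: "Theta q n = Theta_shift q 0 n"
  by (induction n) (simp add: Theta_def, metis Theta_Suc Theta_shift_Suc_right mult.commute add_0)

lemma lin_mult_eq_0_below: "(\<And>j. j < m \<Longrightarrow> x j = 0) \<Longrightarrow> k < m \<Longrightarrow> lin_mult q c x k = 0"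
  by (simp add: lin_mult_def)

lemma lin_mult_node_eq_0_below:
  "(\<And>j. j < n \<Longrightarrow> x j = 0) \<Longrightarrow> k \<le> n \<Longrightarrow> lin_mult q (qnode q (Suc n)) x k = 0"
  by (cases "k = n") (auto simp: lin_mult_def)

lemma lin_mult_eq_0_above: "(\<And>j. N \<le> j \<Longrightarrow> x j = 0) \<Longrightarrow> N < k \<Longrightarrow> lin_mult q c x k = 0"
  by (simp add: lin_mult_def)

lemma phi_mult_eq_0_below_index: "k < n \<Longrightarrow> phi_mult q n x k = 0"
  by (induction n arbitrary: k) (auto intro: lin_mult_node_eq_0_below)

lemma phi_mult_eq_0_below: "(\<And>j. j < m \<Longrightarrow> x j = 0) \<Longrightarrow> k < m \<Longrightarrow> phi_mult q n x k = 0"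
  by (induction n arbitrary: k) (auto intro: lin_mult_eq_0_below)

lemma phi_mult_eq_0_above: "(\<And>j. N \<le> j \<Longrightarrow> x j = 0) \<Longrightarrow> N + n \<le> k \<Longrightarrow> phi_mult q n x k = 0"
proof (induction n arbitrary: k)
  case (Suc n)
  then show ?case using lin_mult_eq_0_above[of "N + n"] by simp
qed simp

lemma linear_factor_mult_Theta:
  "[:- c, 1:] * Theta q k = Theta q (Suc k) + smult (qnode q (Suc k) - c) (Theta q k)"
proof -
  have "[:- c, 1:] = [:- qnode q (Suc k), 1:] + [:qnode q (Suc k) - c:]" by simp
  then show ?thesis by (simp only: Theta_Suc distrib_right) simp
qed

lemma linear_factor_mult_Theta_sum:
  assumes "\<And>j. N \<le> j \<Longrightarrow> x j = 0"
  shows "[:- c, 1:] * (\<Sum>k<N. smult (x k) (Theta q k))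
       = (\<Sum>k<Suc N. smult (lin_mult q c x k) (Theta q k))"
proof -
  have "[:- c, 1:] * (\<Sum>k<N. smult (x k) (Theta q k))
      = (\<Sum>k<N. smult (x k) (Theta q (Suc k)))
        + (\<Sum>k<N. smult (x k * (qnode q (Suc k) - c)) (Theta q k))"
    by (simp only: sum_distrib_left mult_smult_right linear_factor_mult_Theta smult_add_right
        sum.distrib smult_smult)
  also have "(\<Sum>k<N. smult (x k) (Theta q (Suc k)))
      = (\<Sum>k<Suc N. smult (if k = 0 then 0 else x (k - 1)) (Theta q k))"
    by (subst sum.lessThan_Suc_shift) simp
  also have "(\<Sum>k<N. smult (x k * (qnode q (Suc k) - c)) (Theta q k))
      = (\<Sum>k<Suc N. smult (x k * (qnode q (Suc k) - c)) (Theta q k))"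
    using assms by simp
  finally show ?thesis by (simp add: lin_mult_def smult_add_left sum.distrib mult.commute)
qed

lemma Theta_mult_Theta:
  "Theta q n * Theta q m = (\<Sum>k<Suc (n + m). smult (phi_mult q n (PhiA m) k) (Theta q k))"
proof (induction n)
  case 0
  show ?case by (simp add: Theta_def PhiA_def if_distrib sum.delta' cong: if_cong)
next
  case (Suc n)
  have "phi_mult q n (PhiA m) k = 0" if "Suc (n + m) \<le> k" for k
    using that by (intro phi_mult_eq_0_above[of "Suc m"]) (auto simp: PhiA_def)
  then have "[:- qnode q (Suc n), 1:] * (Theta q n * Theta q m)
      = (\<Sum>k<Suc (Suc n + m). smult (phi_mult q (Suc n) (PhiA m) k) (Theta q k))"
    unfolding Suc.IH by (subst linear_factor_mult_Theta_sum) auto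
  then show ?case by (simp only: Theta_Suc mult.assoc)
qed

lemma ncoord_Theta_mult_Theta: "ncoord q 0 (Theta q n * Theta q m) k = phi_mult q n (PhiA m) k"
  unfolding Theta_mult_Theta unfolding Theta_eq_Theta_shift ncoord_Theta_shift_sum
  using phi_mult_eq_0_above[of "Suc m" "PhiA m" n k q] by (auto simp: PhiA_def)

lemma phi_mult_eq_sum: "phi_mult q n x k = (\<Sum>m\<le>k. x m * phi_mult q n (PhiA m) k)"
proof (induction n arbitrary: k)
  case 0
  show ?case by (simp add: PhiA_def if_distrib sum.delta cong: if_cong)
next
  case (Suc n)
  have shift: "(\<Sum>m\<le>k. x m * (if k = 0 then 0 else phi_mult q n (PhiA m) (k - 1)))
      = (if k = 0 then 0 else phi_mult q n x (k - 1))"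
  proof (cases k)
    case (Suc k')
    have "phi_mult q n (PhiA (Suc k')) k' = 0"
      by (rule phi_mult_eq_0_below[of "Suc k'"]) (auto simp: PhiA_def)
    then show ?thesis using Suc.IH[of k'] Suc by simp
  qed simp
  show ?case
    using shift Suc.IH[of k]
    by (simp add: lin_mult_def distrib_left sum.distrib sum_distrib_left mult_ac)
qed

lemma amul_PhiA: "amul q (PhiA n) x = phi_mult q n x"
proof
  fix k
  have "amul q (PhiA n) x k
      = (\<Sum>n'\<le>k. if n' = n then \<Sum>m\<le>k. x m * phi_mult q n (PhiA m) k else 0)"
    unfolding amul_def ncoord_Theta_mult_Theta by (rule sum.cong) (simp_all add: PhiA_def)
  also have "\<dots> = (if n \<le> k then \<Sum>m\<le>k. x m * phi_mult q n (PhiA m) k else 0)"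
    by (simp add: sum.delta')
  finally show "amul q (PhiA n) x k = phi_mult q n x k"
    by (simp add: phi_mult_eq_0_below_index flip: phi_mult_eq_sum)
qed

lemma PhiIdeal_eq_image: "PhiIdeal p q n = phi_mult q n ` Acar p"
  unfolding PhiIdeal_def amul_PhiA by auto

lemma phi_mult_add: "phi_mult q n (\<lambda>m. x m + y m) = (\<lambda>k. phi_mult q n x k + phi_mult q n y k)"
  by (induction n) (simp_all add: fun_eq_iff lin_mult_def algebra_simps)

lemma phi_mult_cmult: "phi_mult q n (\<lambda>m. a * x m) = (\<lambda>k. a * phi_mult q n x k)"
  by (induction n) (simp_all add: fun_eq_iff lin_mult_def algebra_simps)

section \<open>Reduction modulo \<open>p\<close>\<close>

text \<open>Recovers \<open>x\<^sub>k\<close> from \<open>y = lin_mult q c x\<close> by iterating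
  \<open>x\<^sub>k = y\<^sub>k\<^sub>+\<^sub>1 - (q\<^sub>k\<^sub>+\<^sub>2 - c) x\<^sub>k\<^sub>+\<^sub>1\<close> \<open>t\<close> times, up to the remainder in
  \<open>lin_mult_back_subst\<close>.\<close>

definition back_subst :: "int \<Rightarrow> rat \<Rightarrow> (nat \<Rightarrow> rat) \<Rightarrow> nat \<Rightarrow> nat \<Rightarrow> rat" where
  "back_subst q c y k t = (\<Sum>s<t. (- 1) ^ s * y (k + 1 + s) * (\<Prod>i<s. qnode q (k + 2 + i) - c))"

lemma lin_mult_back_subst:
  "x k = back_subst q c (lin_mult q c x) k t
       + (- 1) ^ t * (\<Prod>i<t. qnode q (k + 2 + i) - c) * x (k + t)"
proof (induction t)
  case 0
  show ?case by (simp add: back_subst_def)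
next
  case (Suc t)
  let ?P = "\<Prod>i<t. qnode q (k + 2 + i) - c"
  have x_eq: "x (k + t) = lin_mult q c x (k + 1 + t) - (qnode q (k + 2 + t) - c) * x (k + Suc t)"
    by (simp add: lin_mult_def)
  have "x k = back_subst q c (lin_mult q c x) k t + (- 1) ^ t * ?P * x (k + t)"
    by (rule Suc.IH)
  also have "\<dots> = back_subst q c (lin_mult q c x) k (Suc t)
      + (- 1) ^ Suc t * (?P * (qnode q (k + 2 + t) - c)) * x (k + Suc t)"
    unfolding x_eq by (simp add: back_subst_def algebra_simps)
  also have "?P * (qnode q (k + 2 + t) - c) = (\<Prod>i<Suc t. qnode q (k + 2 + i) - c)"
    by simp
  finally show ?case .
qed

lemma back_subst_Suc_shift:
  "back_subst q c y k (Suc t) = y (Suc k) - (qnode q (k + 2) - c) * back_subst q c y (Suc k) t"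
proof -
  have "(\<Sum>s<t. (- 1) ^ Suc s * y (k + 1 + Suc s) * (\<Prod>i<Suc s. qnode q (k + 2 + i) - c))
      = - (qnode q (k + 2) - c) * back_subst q c y (Suc k) t"
    unfolding back_subst_def sum_distrib_left
    by (intro sum.cong refl) (subst prod.lessThan_Suc_shift, simp add: algebra_simps)
  then show ?thesis unfolding back_subst_def[of q c y k] sum.lessThan_Suc_shift
    by (simp add: algebra_simps)
qed

context
  fixes p :: nat and q :: int
  assumes p_prime: "prime p" and p_ndvd_q: "\<not> int p dvd q"
begin

lemma zloc_qnode: "zloc p (qnode q i)"
  unfolding qnode_def by (rule zloc_powi[OF p_prime p_ndvd_q])

lemma int_fermat: "[q ^ (p - 1) = 1] (mod int p)"
proof -
  define a where "a = nat (q mod int p)"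
  have a: "int a = q mod int p" using p_prime by (simp add: a_def prime_gt_0_nat)
  then have "\<not> p dvd a" using p_ndvd_q by (metis dvd_mod_iff int_dvd_int_iff dvd_refl)
  then have "[int a ^ (p - 1) = 1] (mod int p)"
    using fermat_theorem[OF p_prime] by (metis cong_int_iff of_nat_1 of_nat_power)
  moreover have "[q = int a] (mod int p)" using a by (simp add: cong_def)
  ultimately show ?thesis using cong_pow cong_trans by blast
qed

lemma pdvd_loc_qpow_sub_1: "pdvd_loc p (of_int q ^ ((p - 1) * t) - 1)"
proof -
  have "[(q ^ (p - 1)) ^ t = 1 ^ t] (mod int p)" using int_fermat by (rule cong_pow)
  then have "int p dvd q ^ ((p - 1) * t) - 1" by (simp add: cong_iff_dvd_diff power_mult)
  then show ?thesis using pdvd_loc_of_int[OF p_prime] by fastforce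
qed

lemma pdvd_loc_qpowi_diff:
  assumes "int (p - 1) dvd a - b"
  shows "pdvd_loc p (of_int q powi a - of_int q powi b)"
proof -
  have step: "pdvd_loc p (of_int q powi (c + int (p - 1) * int t) - of_int q powi c)" for c t
  proof -
    have "(of_int q :: rat) \<noteq> 0" using p_ndvd_q by auto
    then have "(of_int q :: rat) powi (c + int (p - 1) * int t)
        = of_int q powi c * of_int q ^ ((p - 1) * t)"
      by (subst power_int_add) (simp_all add: power_int_mult power_mult)
    then have "of_int q powi (c + int (p - 1) * int t) - of_int q powi c
        = of_int q powi c * (of_int q ^ ((p - 1) * t) - (1 :: rat))"
      by (simp add: algebra_simps)
    then show ?thesis
      using pdvd_loc_mult_right[OF p_prime zloc_powi[OF p_prime p_ndvd_q] pdvd_loc_qpow_sub_1] by simp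
  qed
  obtain t where t: "a - b = int (p - 1) * t" using assms by (elim dvdE)
  show ?thesis
  proof (cases "t \<ge> 0")
    case True
    then have "a = b + int (p - 1) * int (nat t)" using t by simp
    then show ?thesis using step[of b "nat t"] by (simp only:)
  next
    case False
    then have "b = a + int (p - 1) * int (nat (- t))" using t by (simp add: algebra_simps)
    then show ?thesis
      using pdvd_loc_uminus[OF p_prime step[of a "nat (- t)"]] by (simp only: minus_diff_eq)
  qed
qed

lemma qnode_window:
  "\<exists>i<2 * p. pdvd_loc p (qnode q (k + 2 + i) - qnode q j)"
proof -
  \<comment> \<open>take \<open>k + 2 + i = 2m\<close> with \<open>m \<equiv> e mod p - 1\<close>, where \<open>q\<^sub>j = q\<^sup>e\<close>\<close>
  obtain e where e: "qnode q j = of_int q powi e" unfolding qnode_def by blast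
  have p2: "p \<ge> 2" using p_prime prime_ge_2_nat by blast
  define m0 where "m0 = (k + 3) div 2"
  define r where "r = (e - int m0) mod int (p - 1)"
  have r: "0 \<le> r" "r < int (p - 1)" using p2 by (simp_all add: r_def)
  define m where "m = m0 + nat r"
  have "int m - e = - (int (p - 1) * ((e - int m0) div int (p - 1)))"
    unfolding m_def r_def using r(1) by (simp add: r_def minus_mod_eq_mult_div[symmetric])
  then have "int (p - 1) dvd int m - e" by simp
  then have "pdvd_loc p (of_int q powi int m - of_int q powi e)"
    by (rule pdvd_loc_qpowi_diff)
  moreover have "qnode q (2 * m) = of_int q powi int m" by (simp add: qnode_def)
  ultimately have "pdvd_loc p (qnode q (2 * m) - qnode q j)" using e by (simp only:)
  moreover have "k + 2 \<le> 2 * m" "2 * m < k + 2 + 2 * p"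
  proof -
    have "k + 2 \<le> 2 * m0" "2 * m0 \<le> k + 3" unfolding m0_def by presburger+
    moreover have "nat r < p - 1" using r by (simp add: nat_less_iff)
    ultimately show "k + 2 \<le> 2 * m" "2 * m < k + 2 + 2 * p" unfolding m_def by auto
  qed
  ultimately show ?thesis
    by (metis add_less_cancel_left le_add_diff_inverse)
qed

lemma qnode_window_prod:
  "pdvd_loc p (\<Prod>i<2 * p. qnode q (k + 2 + i) - qnode q j)"
proof -
  obtain i where "i < 2 * p" "pdvd_loc p (qnode q (k + 2 + i) - qnode q j)"
    using qnode_window by blast
  then show ?thesis
    by (intro pdvd_loc_prod[OF p_prime]) (auto intro: zloc_diff[OF p_prime] zloc_qnode)
qed

lemma lin_mult_Acar: "zloc p c \<Longrightarrow> x \<in> Acar p \<Longrightarrow> lin_mult q c x \<in> Acar p"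
  unfolding Acar_def lin_mult_def
  by (auto intro!: zloc_add zloc_mult zloc_diff zloc_qnode zloc_0 p_prime)

lemma phi_mult_Acar: "x \<in> Acar p \<Longrightarrow> phi_mult q n x \<in> Acar p"
  by (induction n) (auto intro: lin_mult_Acar zloc_qnode)

lemma zloc_back_subst: "zloc p c \<Longrightarrow> y \<in> Acar p \<Longrightarrow> zloc p (back_subst q c y k t)"
  unfolding back_subst_def Acar_def
  by (auto intro!: zloc_sum zloc_mult zloc_prod zloc_diff zloc_qnode zloc_sign p_prime)

lemma pdvd_loc_back_subst:
  "zloc p c \<Longrightarrow> (\<And>m. pdvd_loc p (y m)) \<Longrightarrow> pdvd_loc p (back_subst q c y k t)"
  unfolding back_subst_def
proof (intro pdvd_loc_sum[OF p_prime])
  fix s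
  assume "zloc p c" "\<And>m. pdvd_loc p (y m)"
  then have "pdvd_loc p ((- 1) ^ s * y (k + 1 + s))"
    by (intro pdvd_loc_mult_right[OF p_prime zloc_sign[OF p_prime]])
  moreover have "zloc p (\<Prod>i<s. qnode q (k + 2 + i) - c)"
    using \<open>zloc p c\<close> by (intro zloc_prod zloc_diff zloc_qnode p_prime)
  ultimately show "pdvd_loc p ((- 1) ^ s * y (k + 1 + s) * (\<Prod>i<s. qnode q (k + 2 + i) - c))"
    by (rule pdvd_loc_mult_left[OF p_prime])
qed

lemma pdvd_loc_of_lin_mult:
  assumes "x \<in> Acar p" "\<And>k. pdvd_loc p (lin_mult q (qnode q j) x k)"
  shows "pdvd_loc p (x k)"
proof -
  have "pdvd_loc p (back_subst q (qnode q j) (lin_mult q (qnode q j) x) k (2 * p))"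
    using assms(2) by (rule pdvd_loc_back_subst[OF zloc_qnode])
  moreover have
    "pdvd_loc p ((- 1) ^ (2 * p) * (\<Prod>i<2 * p. qnode q (k + 2 + i) - qnode q j) * x (k + 2 * p))"
    using assms(1) unfolding Acar_def
    by (intro pdvd_loc_mult_left[OF p_prime] pdvd_loc_mult_right[OF p_prime zloc_sign[OF p_prime]]
        qnode_window_prod) auto
  ultimately have "pdvd_loc p (back_subst q (qnode q j) (lin_mult q (qnode q j) x) k (2 * p)
      + (- 1) ^ (2 * p) * (\<Prod>i<2 * p. qnode q (k + 2 + i) - qnode q j) * x (k + 2 * p))"
    by (rule pdvd_loc_add[OF p_prime])
  then show ?thesis by (simp only: lin_mult_back_subst[of x k q "qnode q j" "2 * p", symmetric])
qed

lemma pdvd_loc_of_phi_mult: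
  "x \<in> Acar p \<Longrightarrow> (\<And>k. pdvd_loc p (phi_mult q n x k)) \<Longrightarrow> pdvd_loc p (x k)"
proof (induction n arbitrary: k)
  case (Suc n)
  have "pdvd_loc p (phi_mult q n x k')" for k'
  proof (rule pdvd_loc_of_lin_mult)
    show "phi_mult q n x \<in> Acar p" using Suc.prems(1) by (rule phi_mult_Acar)
    show "pdvd_loc p (lin_mult q (qnode q (Suc n)) (phi_mult q n x) k)" for k
      using Suc.prems(2)[of k] by simp
  qed
  then show ?case using Suc.IH Suc.prems(1) by blast
qed simp

lemma zloc_divide_power_of_phi_mult:
  "x \<in> Acar p \<Longrightarrow> (\<And>k. zloc p (phi_mult q n x k / of_nat p ^ e)) \<Longrightarrow> zloc p (x k / of_nat p ^ e)"
proof (induction e arbitrary: x k)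
  case (Suc e)
  have p0: "(of_nat p :: rat) \<noteq> 0" using p_prime by simp
  have "pdvd_loc p (phi_mult q n x k')" for k'
  proof -
    have "phi_mult q n x k' / of_nat p = of_nat (p ^ e) * (phi_mult q n x k' / of_nat p ^ Suc e)"
      using p0 by (simp add: field_simps)
    then show ?thesis
      unfolding pdvd_loc_def by (metis zloc_mult[OF p_prime zloc_of_nat[OF p_prime] Suc.prems(2)])
  qed
  then have "pdvd_loc p (x m)" for m using pdvd_loc_of_phi_mult Suc.prems(1) by blast
  then have x': "(\<lambda>m. inverse (of_nat p) * x m) \<in> Acar p"
    unfolding Acar_def pdvd_loc_def by (simp add: field_simps)
  have "zloc p (inverse (of_nat p) * x k / of_nat p ^ e)"
  proof (rule Suc.IH[OF x'])
    show "zloc p (phi_mult q n (\<lambda>m. inverse (of_nat p) * x m) k' / of_nat p ^ e)" for k'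
      using Suc.prems(2)[of k'] unfolding phi_mult_cmult by (simp add: field_simps)
  qed
  then show ?case by (simp add: field_simps)
qed (simp add: Acar_def)

lemma lin_mult_decomp:
  assumes y: "y \<in> Aideal p (Suc n)"
  shows "\<exists>w\<in>Aideal p n. \<exists>z\<in>Aideal p (Suc n).
           y = (\<lambda>k. of_nat p * z k + lin_mult q (qnode q (Suc n)) w k)"
proof -
  \<comment> \<open>\<open>w\<close> truncates the back substitution of \<open>y\<close> after \<open>2p + 1\<close> steps; the error
    contains a full window of \<open>2p\<close> factors and is therefore divisible by \<open>p\<close>\<close>
  define c where "c = qnode q (Suc n)"
  define w where "w k = (if k < n then 0 else back_subst q c y k (Suc (2 * p)))" for k
  define z where "z k = (y k - lin_mult q c w k) / of_nat p" for k
  have y_Acar: "y \<in> Acar p" and y_0: "\<And>k. k \<le> n \<Longrightarrow> y k = 0"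
    using y by (auto simp: Aideal_def)
  have c: "zloc p c" unfolding c_def by (rule zloc_qnode)
  have w: "w \<in> Aideal p n"
    using zloc_back_subst[OF c y_Acar] zloc_0[OF p_prime]
    by (auto simp: Aideal_def Acar_def w_def)
  have low: "lin_mult q c w k = 0" if "k \<le> n" for k
    unfolding c_def using that by (intro lin_mult_node_eq_0_below) (auto simp: w_def)
  have high: "pdvd_loc p (y k - lin_mult q c w k)" if "n < k" for k
  proof -
    obtain k' where k: "k = Suc k'" and "n \<le> k'" using \<open>n < k\<close> by (cases k) auto
    let ?P = "\<Prod>i<2 * p. qnode q (k + 2 + i) - c"
    have "w k' = y k - (qnode q (Suc k) - c) * back_subst q c y k (2 * p)"
      using \<open>n \<le> k'\<close> by (simp add: w_def k back_subst_Suc_shift)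
    moreover have "w k = back_subst q c y k (2 * p) + y (k + 1 + 2 * p) * ?P"
      using \<open>n < k\<close> by (simp add: w_def back_subst_def)
    ultimately have "y k - lin_mult q c w k = - ((qnode q (Suc k) - c) * y (k + 1 + 2 * p) * ?P)"
      by (simp add: lin_mult_def k algebra_simps)
    moreover have "zloc p ((qnode q (Suc k) - c) * y (k + 1 + 2 * p))"
      using y_Acar c unfolding Acar_def by (intro zloc_mult zloc_diff zloc_qnode p_prime p_ndvd_q) auto
    ultimately show ?thesis
      unfolding c_def by (metis pdvd_loc_uminus pdvd_loc_mult_right qnode_window_prod p_prime p_ndvd_q)
  qed
  have "zloc p (z k)" for k
  proof (cases "n < k")
    case True
    then show ?thesis using high[OF True] by (simp add: z_def pdvd_loc_def)
  next
    case False
    then show ?thesis using low y_0 zloc_0[OF p_prime] by (simp add: z_def)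
  qed
  moreover have "z k = 0" if "k < Suc n" for k
    using that low y_0 by (simp add: z_def)
  ultimately have "z \<in> Aideal p (Suc n)" by (simp add: Aideal_def Acar_def)
  moreover have "y = (\<lambda>k. of_nat p * z k + lin_mult q c w k)"
    using p_prime by (simp add: z_def fun_eq_iff)
  ultimately show ?thesis using w unfolding c_def by blast
qed

lemma phi_mult_decomp:
  "y \<in> Aideal p n \<Longrightarrow> \<exists>z\<in>Aideal p n. \<exists>x\<in>Acar p. y = (\<lambda>k. of_nat p * z k + phi_mult q n x k)"
proof (induction n arbitrary: y)
  case 0
  then show ?case using zloc_0[OF p_prime] by (auto simp: Aideal_def Acar_def)
next
  case (Suc n)
  define c where "c = qnode q (Suc n)"
  obtain w z1 where w: "w \<in> Aideal p n" and z1: "z1 \<in> Aideal p (Suc n)"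
    and y: "y = (\<lambda>k. of_nat p * z1 k + lin_mult q c w k)"
    using lin_mult_decomp[OF Suc.prems] unfolding c_def by blast
  obtain z2 x where z2: "z2 \<in> Aideal p n" and x: "x \<in> Acar p"
    and w_eq: "w = (\<lambda>k. of_nat p * z2 k + phi_mult q n x k)"
    using Suc.IH[OF w] by blast
  define z where "z k = z1 k + lin_mult q c z2 k" for k
  have "lin_mult q c w k = of_nat p * lin_mult q c z2 k + phi_mult q (Suc n) x k" for k
    by (simp add: w_eq c_def lin_mult_def algebra_simps)
  then have "y = (\<lambda>k. of_nat p * z k + phi_mult q (Suc n) x k)"
    by (simp add: y z_def fun_eq_iff algebra_simps)
  moreover have "z \<in> Aideal p (Suc n)"
  proof -
    have "lin_mult q c z2 \<in> Acar p"
      using z2 unfolding c_def Aideal_def by (intro lin_mult_Acar zloc_qnode p_prime p_ndvd_q) auto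
    moreover have "lin_mult q c z2 k = 0" if "k < Suc n" for k
      using z2 that unfolding c_def Aideal_def by (intro lin_mult_node_eq_0_below) auto
    ultimately show ?thesis using z1 by (auto simp: Aideal_def Acar_def z_def zloc_add p_prime)
  qed
  ultimately show ?case using x by blast
qed

lemma phi_mult_decomp_power:
  "y \<in> Aideal p n \<Longrightarrow> \<exists>z\<in>Aideal p n. \<exists>x\<in>Acar p. y = (\<lambda>k. of_nat p ^ e * z k + phi_mult q n x k)"
proof (induction e)
  case 0
  have "(\<lambda>_. 0) \<in> Acar p" using zloc_0[OF p_prime] by (simp add: Acar_def)
  moreover have "phi_mult q n (\<lambda>_. 0) = (\<lambda>_. 0)" using phi_mult_cmult[of q n 0 "\<lambda>_. 0"] by simp
  ultimately show ?case using 0 by force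
next
  case (Suc e)
  obtain z x where z: "z \<in> Aideal p n" and x: "x \<in> Acar p"
    and y: "y = (\<lambda>k. of_nat p ^ e * z k + phi_mult q n x k)"
    using Suc.IH[OF Suc.prems] by blast
  obtain z' x' where z': "z' \<in> Aideal p n" and x': "x' \<in> Acar p"
    and z_eq: "z = (\<lambda>k. of_nat p * z' k + phi_mult q n x' k)"
    using phi_mult_decomp[OF z] by blast
  have "phi_mult q n (\<lambda>m. x m + of_nat p ^ e * x' m)
      = (\<lambda>k. phi_mult q n x k + of_nat p ^ e * phi_mult q n x' k)"
    by (simp only: phi_mult_add phi_mult_cmult)
  then have "y = (\<lambda>k. of_nat p ^ Suc e * z' k + phi_mult q n (\<lambda>m. x m + of_nat p ^ e * x' m) k)"
    by (simp add: y z_eq algebra_simps)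
  moreover have "(\<lambda>m. x m + of_nat p ^ e * x' m) \<in> Acar p"
    using x x' zloc_of_nat[OF p_prime, of "p ^ e"]
    by (simp add: Acar_def zloc_add zloc_mult p_prime)
  ultimately show ?case using z' by blast
qed

lemma int_prime_power_decomp:
  assumes "k \<noteq> 0"
  obtains e u where "k = int p ^ e * u" "\<not> int p dvd u"
proof -
  have "\<not> is_unit (int p)" using prime_gt_1_nat[OF p_prime] by simp
  then show ?thesis using multiplicity_decompose'[OF assms] that by blast
qed

lemma quotient_divisible_Aideal_PhiIdeal: "quotient_divisible (Aideal p n) (PhiIdeal p q n)"
  unfolding quotient_divisible_def PhiIdeal_eq_image
proof (intro ballI allI impI)
  fix y and k :: int
  assume y: "y \<in> Aideal p n" and "k \<noteq> 0"
  obtain e u where k: "k = int p ^ e * u" and u: "\<not> int p dvd u"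
    using int_prime_power_decomp[OF \<open>k \<noteq> 0\<close>] by blast
  obtain z x where z: "z \<in> Aideal p n" and x: "x \<in> Acar p"
    and y_eq: "y = (\<lambda>i. of_nat p ^ e * z i + phi_mult q n x i)"
    using phi_mult_decomp_power[OF y] by blast
  have "(\<lambda>i. z i / of_int u) \<in> Aideal p n"
    using z u by (auto simp: Aideal_def Acar_def intro: zloc_divide_int[OF p_prime])
  moreover have "(\<lambda>i. of_int k * (z i / of_int u) - y i) = phi_mult q n (\<lambda>m. - x m)"
    using u phi_mult_cmult[of q n "- 1" x] by (auto simp: k y_eq fun_eq_iff)
  moreover have "(\<lambda>m. - x m) \<in> Acar p"
    using x by (simp add: Acar_def zloc_uminus p_prime)
  ultimately show "\<exists>z\<in>Aideal p n. (\<lambda>i. of_int k * z i - y i) \<in> phi_mult q n ` Acar p"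
    by (metis image_eqI)
qed

lemma quotient_torsion_free_Aideal_PhiIdeal: "quotient_torsion_free (Aideal p n) (PhiIdeal p q n)"
  unfolding quotient_torsion_free_def PhiIdeal_eq_image
proof (intro ballI allI impI)
  fix y and k :: int
  assume y: "y \<in> Aideal p n" and "k \<noteq> 0" and "(\<lambda>i. of_int k * y i) \<in> phi_mult q n ` Acar p"
  then obtain x where x: "x \<in> Acar p" and x_eq: "phi_mult q n x = (\<lambda>i. of_int k * y i)"
    by auto
  obtain e u where k: "k = int p ^ e * u" and u: "\<not> int p dvd u"
    using int_prime_power_decomp[OF \<open>k \<noteq> 0\<close>] by blast
  have "zloc p (x m / of_nat p ^ e)" for m
  proof (rule zloc_divide_power_of_phi_mult[OF x])
    show "zloc p (phi_mult q n x i / of_nat p ^ e)" for i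
      using y p_prime by (simp add: x_eq k Aideal_def Acar_def zloc_mult zloc_of_int)
  qed
  then have "zloc p (x m / of_nat p ^ e / of_int u)" for m
    using u by (intro zloc_divide_int p_prime)
  then have "(\<lambda>m. inverse (of_int k) * x m) \<in> Acar p"
    by (simp add: Acar_def k field_simps)
  moreover have "y = phi_mult q n (\<lambda>m. inverse (of_int k) * x m)"
    using \<open>k \<noteq> 0\<close> by (simp add: phi_mult_cmult x_eq fun_eq_iff)
  ultimately show "y \<in> phi_mult q n ` Acar p" by blast
qed

end

lemma primitive_mod_coprime:
  assumes "primitive_mod m q"
  shows "coprime (int m) q"
proof -
  have "m > 0" "coprime m (nat (q mod int m))"
    using assms by (simp_all add: primitive_mod_def residue_primroot_def)
  moreover from \<open>m > 0\<close> have "int (nat (q mod int m)) = q mod int m" by simp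
  ultimately show ?thesis by (metis coprime_int_iff coprime_mod_right_iff of_nat_0_less_iff less_irrefl)
qed

theorem proposition3p3:
  fixes p :: nat and q :: int and n :: nat
  assumes "prime p" and "odd p"
    and "primitive_mod (p ^ 2) q"
    and "n \<ge> 1"
  shows "quotient_divisible (Aideal p n) (PhiIdeal p q n)
       \<and> quotient_torsion_free (Aideal p n) (PhiIdeal p q n)"
proof -
  \<comment> \<open>only \<open>p \<nmid> q\<close> is used\<close>
  have "coprime (int (p ^ 2)) q" using assms(3) by (rule primitive_mod_coprime)
  moreover have "int p dvd int (p ^ 2)" by simp
  moreover have "\<not> is_unit (int p)" using prime_gt_1_nat[OF assms(1)] by simp
  ultimately have "\<not> int p dvd q" using coprime_common_divisor by blast
  then show ?thesis
    using assms(1) quotient_divisible_Aideal_PhiIdeal quotient_torsion_free_Aideal_PhiIdeal by blast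
qed

end
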